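(* Fix $l\in(0,1/2)$, $0<\alpha<\beta<1$ and $\delta>0$. For $\varepsilon>0$ let $S=S_{N,\varepsilon}:=\{(x,y)\in V_N^l\times V_N^l:\ N^{\beta(1-\varepsilon)}\le|x-y|\le N^\beta\}$ and $\gamma^*=2/(2-\beta)$. Then there exist $C,\varepsilon_0>0$ such that for all $\varepsilon\le\varepsilon_0$ and all $N$, $$\max_{(x,y)\in S}\mathbf P(x,y\in\mathcal H_N(\alpha))\le C N^{-2\alpha^2F_{2,\beta}(\gamma^* )+\delta}.$$ Moreover $\varepsilon_0$ can be chosen uniformly in $(\alpha,\beta)$ over compact subsets of $(0,1)^2$.
   Context: For an integer $N\ge1$ let $V_N=\{1,\dots,N\}^2\subset\mathbb Z^2$, let $\partial V_N$ be the set of points of $V_N$ having a nearest neighbour outside $V_N$, and $\mathrm{int}(V_N)=V_N\setminus\partial V_N$. The two-dimensional discrete Gaussian free field (GFF) on $V_N$ is the centered Gaussian family $\Phi=(\Phi_x)_{x\in V_N}$ (under a probability $\mathbf P$) with $\Phi_x=0$ for $x\in\partial V_N$ and covariance $\mathrm{Cov}(\Phi_x,\Phi_y)=G_N(x,y)=\mathbb E_x\big(\sum_{i=0}^{\tau_{\partial V_N}}\mathbf 1_{\{\eta_i=y\}}\big)$ for $x,y\in\mathrm{int}(V_N)$, where $(\eta_i)_{i\ge0}$ is simple random walk on $\mathbb Z^2$ started at $x$ and $\tau_{\partial V_N}=\inf\{i\ge0:\eta_i\in\partial V_N\}$. Let $g=2/\pi$ and $\log$ the natural logarithm. For $l\in(0,1/2)$,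 $V_N^l:=\{x\in V_N:\mathrm{dist}(x,V_N^c)\ge lN\}$, and for $\eta\in(0,1)$, $\mathcal H_N(\eta):=\{x\in V_N^l:\Phi_x\ge 2\sqrt g\,\eta\log N\}$. For $h\ge0$, $F_{h,\beta}(\gamma)=\gamma^2(1-\beta)+h(1-\gamma(1-\beta))^2/\beta$. *)

theory Defs
  imports "HOL-Probability.Probability"
begin

type_synonym pt = "int \<times> int"

definition VN :: "nat \<Rightarrow> pt set" where
  "VN N = {1..int N} \<times> {1..int N}"

definition nbrs :: "pt \<Rightarrow> pt set" where
  "nbrs x = {(fst x + 1, snd x), (fst x - 1, snd x), (fst x, snd x + 1), (fst x, snd x - 1)}"

definition bdry :: "nat \<Rightarrow> pt set" where
  "bdry N = {x \<in> VN N. \<exists>z \<in> nbrs x. z \<notin> VN N}"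

definition intV :: "nat \<Rightarrow> pt set" where
  "intV N = VN N - bdry N"

definition ptnorm :: "pt \<Rightarrow> real" where
  "ptnorm x = sqrt ((real_of_int (fst x))\<^sup>2 + (real_of_int (snd x))\<^sup>2)"

text \<open>Killed-walk kernel: probability that simple random walk from x is at y at time n
  and has stayed in the interior at all times 0..n (i.e. n \<le> tau and eta_n = y, y interior).\<close>
fun killed :: "nat \<Rightarrow> nat \<Rightarrow> pt \<Rightarrow> pt \<Rightarrow> real" where
  "killed N 0 x y = (if x = y \<and> x \<in> intV N then 1 else 0)"
| "killed N (Suc n) x y =
     (if x \<in> intV N then
        (killed N n (fst x + 1, snd x) y + killed N n (fst x - 1, snd x) y
         + killed N n (fst x, snd x + 1) y + killed N n (fst x, snd x - 1) y) / 4
      else 0)"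

text \<open>Green function G_N(x,y) = E_x (number of visits to y up to tau).\<close>
definition green :: "nat \<Rightarrow> pt \<Rightarrow> pt \<Rightarrow> real" where
  "green N x y = (\<Sum>n. killed N n x y)"

definition centered_gaussian :: "'a measure \<Rightarrow> ('a \<Rightarrow> real) \<Rightarrow> real \<Rightarrow> bool" where
  "centered_gaussian M X v \<longleftrightarrow> X \<in> borel_measurable M \<and> v \<ge> 0 \<and>
     (if v = 0 then (AE \<omega> in M. X \<omega> = 0)
      else distributed M lborel X (normal_density 0 (sqrt v)))"

definition is_dgff :: "'a measure \<Rightarrow> nat \<Rightarrow> (pt \<Rightarrow> 'a \<Rightarrow> real) \<Rightarrow> bool" where
  "is_dgff M N \<Phi> \<longleftrightarrow> prob_space M \<and>
     (\<forall>x. \<Phi> x \<in> borel_measurable M) \<and>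
     (\<forall>x \<in> bdry N. \<forall>\<omega> \<in> space M. \<Phi> x \<omega> = 0) \<and>
     (\<forall>c :: pt \<Rightarrow> real. centered_gaussian M (\<lambda>\<omega>. \<Sum>x\<in>intV N. c x * \<Phi> x \<omega>)
        (\<Sum>x\<in>intV N. \<Sum>y\<in>intV N. c x * c y * green N x y))"

definition gconst :: real where "gconst = 2 / pi"

definition distc :: "nat \<Rightarrow> pt \<Rightarrow> real" where
  "distc N x = Inf {ptnorm (x - z) | z. z \<notin> VN N}"

definition VNl :: "nat \<Rightarrow> real \<Rightarrow> pt set" where
  "VNl N l = {x \<in> VN N. distc N x \<ge> l * real N}"

definition HN :: "nat \<Rightarrow> real \<Rightarrow> real \<Rightarrow> (pt \<Rightarrow> 'a \<Rightarrow> real) \<Rightarrow> 'a \<Rightarrow> pt set" where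
  "HN N l \<eta> \<Phi> \<omega> = {x \<in> VNl N l. \<Phi> x \<omega> \<ge> 2 * sqrt gconst * \<eta> * ln (real N)}"

definition Ffun :: "real \<Rightarrow> real \<Rightarrow> real \<Rightarrow> real" where
  "Ffun h \<beta> \<gamma> = \<gamma>\<^sup>2 * (1 - \<beta>) + h * (1 - \<gamma> * (1 - \<beta>))\<^sup>2 / \<beta>"

definition Sset :: "nat \<Rightarrow> real \<Rightarrow> real \<Rightarrow> real \<Rightarrow> (pt \<times> pt) set" where
  "Sset N l \<beta> \<epsilon> = {(x, y). x \<in> VNl N l \<and> y \<in> VNl N l \<and>
      real N powr (\<beta> * (1 - \<epsilon>)) \<le> ptnorm (x - y) \<and> ptnorm (x - y) \<le> real N powr \<beta>}"

end

theory Submission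
  imports Defs "HOL-Real_Asymp.Real_Asymp"
begin

text \<open>If both \<open>\<Phi> x\<close> and \<open>\<Phi> y\<close> exceed \<open>2 \<surd>g \<alpha> log N\<close>, the centered Gaussian
  \<open>\<Phi> x + \<Phi> y\<close> exceeds twice that level, and its variance is
  \<open>G(x,x) + G(x,y) + G(y,x) + G(y,y) \<le> g (4 - 2 \<beta> + o(1)) log N\<close> when \<open>|x - y| \<ge> N\<^bsup>\<beta>(1-\<epsilon>)\<^esup>\<close>;
  the Gaussian tail is then \<open>N\<^bsup>-4 \<alpha>\<^sup>2/(2-\<beta>) + o(1)\<^esup>\<close>, and \<open>F\<^sub>2\<^sub>,\<^sub>\<beta>(\<gamma>\<^sup>*) = 2/(2-\<beta>)\<close>.

  The Green function is the expected number of visits of the walk killed on the boundary.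
  Up to time \<open>2 R N\<^sup>2\<close> the killed walk is dominated by the free walk, whose \<open>n\<close>-step
  probabilities are at most \<open>1/(\<pi> \<lfloor>n/2\<rfloor>)\<close> (Wallis' product) and negligible for \<open>n \<ll> |x - y|\<^sup>2\<close>
  (Chernoff); afterwards it survives with probability at most \<open>1/R\<close>, because the expected exit
  time is at most \<open>2 N\<^sup>2\<close>. Summing gives \<open>G(x,x) \<le> g log N + O(1)\<close> and
  \<open>G(x,y) \<le> g log (N / |x - y|) + o(log N)\<close>.\<close>

section \<open>The killed random walk\<close>

lemma finite_VN: "finite (VN N)"
  unfolding VN_def by auto

lemma finite_intV: "finite (intV N)"
  unfolding intV_def using finite_VN by auto

lemma intV_imp_VN: "x \<in> intV N \<Longrightarrow> x \<in> VN N"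
  unfolding intV_def by auto

lemma intV_neighbours_in_VN:
  assumes "x \<in> intV N"
  shows "(fst x + 1, snd x) \<in> VN N" "(fst x - 1, snd x) \<in> VN N"
        "(fst x, snd x + 1) \<in> VN N" "(fst x, snd x - 1) \<in> VN N"
  using assms unfolding intV_def bdry_def nbrs_def by auto

lemma killed_nonneg: "0 \<le> killed N n x y"
  by (induction n arbitrary: x) auto

lemma killed_eq_0_start: "x \<notin> intV N \<Longrightarrow> killed N n x y = 0"
  by (cases n) auto

lemma killed_eq_0_end: "y \<notin> intV N \<Longrightarrow> killed N n x y = 0"
  by (induction n arbitrary: x) auto

lemma killed_add:
  "killed N (n + m) x y = (\<Sum>w\<in>intV N. killed N n x w * killed N m w y)"
proof (induction n arbitrary: x)
  case 0
  have "(\<Sum>w\<in>intV N. killed N 0 x w * killed N m w y)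
      = (\<Sum>w\<in>intV N. (if w = x then killed N m x y else 0))"
    by (rule sum.cong) (auto simp: killed_eq_0_start)
  also have "\<dots> = killed N m x y"
    using finite_intV[of N] by (auto simp: killed_eq_0_start)
  finally show ?case by simp
next
  case (Suc n)
  show ?case
  proof (cases "x \<in> intV N")
    case True
    have "killed N (Suc n + m) x y =
      (killed N (n + m) (fst x + 1, snd x) y + killed N (n + m) (fst x - 1, snd x) y
       + killed N (n + m) (fst x, snd x + 1) y + killed N (n + m) (fst x, snd x - 1) y) / 4"
      using True by simp
    also have "\<dots> = (\<Sum>w\<in>intV N. killed N (Suc n) x w * killed N m w y)"
      unfolding Suc.IH using True
      by (simp add: sum.distrib[symmetric] sum_divide_distrib[symmetric] algebra_simps)
    finally show ?thesis .
  qed (simp add: killed_eq_0_start)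
qed

definition survival :: "nat \<Rightarrow> nat \<Rightarrow> pt \<Rightarrow> real" where
  "survival N n x = (\<Sum>w\<in>intV N. killed N n x w)"

lemma survival_nonneg: "0 \<le> survival N n x"
  unfolding survival_def by (intro sum_nonneg killed_nonneg)

lemma survival_eq_0: "x \<notin> intV N \<Longrightarrow> survival N n x = 0"
  unfolding survival_def by (simp add: killed_eq_0_start)

lemma survival_0: "survival N 0 x = (if x \<in> intV N then 1 else 0)"
  unfolding survival_def using finite_intV[of N]
  by (auto simp: if_distrib sum.delta cong: if_cong)

lemma survival_Suc:
  "x \<in> intV N \<Longrightarrow> survival N (Suc n) x =
     (survival N n (fst x + 1, snd x) + survival N n (fst x - 1, snd x)
      + survival N n (fst x, snd x + 1) + survival N n (fst x, snd x - 1)) / 4"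
  unfolding survival_def by (simp add: sum.distrib[symmetric] sum_divide_distrib[symmetric])

lemma survival_le_1: "survival N n x \<le> 1"
proof (induction n arbitrary: x)
  case (Suc n)
  show ?case
  proof (cases "x \<in> intV N")
    case True
    then show ?thesis using Suc.IH[of "(fst x + 1, snd x)"] Suc.IH[of "(fst x - 1, snd x)"]
        Suc.IH[of "(fst x, snd x + 1)"] Suc.IH[of "(fst x, snd x - 1)"]
      by (simp add: survival_Suc)
  qed (simp add: survival_eq_0)
qed (simp add: survival_0)

lemma survival_Suc_le: "survival N (Suc n) x \<le> survival N n x"
proof -
  have "survival N (Suc n) x = (\<Sum>w\<in>intV N. \<Sum>v\<in>intV N. killed N n x v * killed N 1 v w)"
    unfolding survival_def using killed_add[of N n 1] by simp
  also have "\<dots> = (\<Sum>v\<in>intV N. killed N n x v * survival N 1 v)"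
    unfolding survival_def by (subst sum.swap) (simp add: sum_distrib_left)
  also have "\<dots> \<le> (\<Sum>v\<in>intV N. killed N n x v)"
    by (intro sum_mono) (metis killed_nonneg mult.right_neutral mult_left_mono survival_le_1)
  finally show ?thesis unfolding survival_def .
qed

lemma survival_antimono: "m \<le> n \<Longrightarrow> survival N n x \<le> survival N m x"
  by (induction n rule: dec_induct) (auto intro: order_trans[OF survival_Suc_le])

text \<open>The expected exit time is bounded through the potential \<open>N\<^sup>2 - (x\<^sub>1 - (N+1)/2)\<^sup>2\<close>,
  which is nonnegative on the box and whose discrete Laplacian is \<open>-1/2\<close>.\<close>

definition exit_potential :: "nat \<Rightarrow> pt \<Rightarrow> real" where
  "exit_potential N x = (real N)\<^sup>2 - (real_of_int (fst x) - (real N + 1) / 2)\<^sup>2"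

lemma exit_potential_nonneg: "x \<in> VN N \<Longrightarrow> 0 \<le> exit_potential N x"
proof -
  assume "x \<in> VN N"
  then have "1 \<le> real_of_int (fst x)" "real_of_int (fst x) \<le> real N" "0 \<le> real N"
    unfolding VN_def by auto
  then have "\<bar>real_of_int (fst x) - (real N + 1) / 2\<bar> \<le> \<bar>real N\<bar>"
    unfolding abs_of_nat abs_le_iff by argo
  then show ?thesis
    unfolding exit_potential_def abs_le_square_iff by simp
qed

lemma sum_survival_le_exit_potential:
  "x \<in> VN N \<Longrightarrow> (\<Sum>m<n. survival N m x) \<le> 2 * exit_potential N x"
proof (induction n arbitrary: x)
  case 0
  then show ?case using exit_potential_nonneg[of x N] by simp
next
  case (Suc n)
  show ?case
  proof (cases "x \<in> intV N")
    case False
    then show ?thesis using exit_potential_nonneg[OF Suc.prems] by (simp add: survival_eq_0)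
  next
    case True
    let ?a = "(fst x + 1, snd x)" and ?b = "(fst x - 1, snd x)"
      and ?c = "(fst x, snd x + 1)" and ?d = "(fst x, snd x - 1)"
    have "(\<Sum>m<Suc n. survival N m x) = survival N 0 x + (\<Sum>m<n. survival N (Suc m) x)"
      by (rule sum.lessThan_Suc_shift)
    also have "\<dots> = 1 + ((\<Sum>m<n. survival N m ?a) + (\<Sum>m<n. survival N m ?b)
        + (\<Sum>m<n. survival N m ?c) + (\<Sum>m<n. survival N m ?d)) / 4"
      using True
      by (simp add: survival_0 survival_Suc sum.distrib[symmetric] sum_divide_distrib[symmetric])
    also have "\<dots> \<le> 1 + (2 * exit_potential N ?a + 2 * exit_potential N ?b
        + 2 * exit_potential N ?c + 2 * exit_potential N ?d) / 4"
      using Suc.IH[OF intV_neighbours_in_VN(1)[OF True]] Suc.IH[OF intV_neighbours_in_VN(2)[OF True]]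
        Suc.IH[OF intV_neighbours_in_VN(3)[OF True]] Suc.IH[OF intV_neighbours_in_VN(4)[OF True]]
      by simp
    also have "\<dots> = 2 * exit_potential N x"
      unfolding exit_potential_def by (simp add: power2_eq_square field_simps)
    finally show ?thesis .
  qed
qed

lemma sum_survival_le: "(\<Sum>m<n. survival N m x) \<le> 2 * (real N)\<^sup>2"
proof (cases "x \<in> VN N")
  case True
  then show ?thesis
    using sum_survival_le_exit_potential[OF True, of n]
    by (simp add: exit_potential_def) (smt (verit) zero_le_power2)
next
  case False
  then have "x \<notin> intV N" using intV_imp_VN by blast
  then show ?thesis by (simp add: survival_eq_0)
qed

lemma survival_le: "real T * survival N T x \<le> 2 * (real N)\<^sup>2"
proof -
  have "real T * survival N T x = (\<Sum>m<T. survival N T x)" by simp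
  also have "\<dots> \<le> (\<Sum>m<T. survival N m x)" by (intro sum_mono survival_antimono) simp
  finally show ?thesis using sum_survival_le[where n = T and N = N and x = x] by linarith
qed

lemma killed_le_survival: "killed N n x y \<le> survival N n x"
proof (cases "y \<in> intV N")
  case True
  then show ?thesis unfolding survival_def
    using finite_intV member_le_sum[of y "intV N" "killed N n x"] killed_nonneg by blast
qed (simp add: killed_eq_0_end survival_nonneg)

lemma summable_killed: "summable (\<lambda>n. killed N n x y)"
proof (rule summableI_nonneg_bounded[where x = "2 * (real N)\<^sup>2"])
  show "(\<Sum>m<n. killed N m x y) \<le> 2 * (real N)\<^sup>2" for n
    using sum_mono[of "{..<n}" "\<lambda>m. killed N m x y" "\<lambda>m. survival N m x"]
      killed_le_survival sum_survival_le[where n = n and N = N and x = x] by (smt (verit))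
qed (rule killed_nonneg)

lemma green_nonneg: "0 \<le> green N x y"
  unfolding green_def by (intro suminf_nonneg summable_killed killed_nonneg)

lemma green_eq_split:
  "green N x y = (\<Sum>n<T. killed N n x y) + (\<Sum>w\<in>intV N. killed N T x w * green N w y)"
proof -
  have "green N x y = (\<Sum>n. killed N (n + T) x y) + (\<Sum>n<T. killed N n x y)"
    unfolding green_def by (rule suminf_split_initial_segment[OF summable_killed])
  also have "(\<Sum>n. killed N (n + T) x y) = (\<Sum>n. \<Sum>w\<in>intV N. killed N T x w * killed N n w y)"
    by (simp add: killed_add[of N T, symmetric] add.commute)
  also have "\<dots> = (\<Sum>w\<in>intV N. \<Sum>n. killed N T x w * killed N n w y)"
    by (rule suminf_sum) (intro summable_mult summable_killed)
  also have "\<dots> = (\<Sum>w\<in>intV N. killed N T x w * green N w y)"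
    unfolding green_def by (intro sum.cong refl suminf_mult summable_killed)
  finally show ?thesis by simp
qed

lemma green_le_split:
  assumes "\<And>w. w \<in> intV N \<Longrightarrow> green N w y \<le> G"
  shows "green N x y \<le> (\<Sum>n<T. killed N n x y) + survival N T x * G"
proof -
  have "(\<Sum>w\<in>intV N. killed N T x w * green N w y) \<le> (\<Sum>w\<in>intV N. killed N T x w * G)"
    by (intro sum_mono mult_left_mono assms killed_nonneg)
  then show ?thesis
    unfolding green_eq_split[of N x y T] survival_def by (simp add: sum_distrib_right)
qed

section \<open>The free random walk\<close>

definition walk1 :: "nat \<Rightarrow> int \<Rightarrow> real" where
  "walk1 n j = (if - int n \<le> j \<and> j \<le> int n \<and> even (int n + j)
                then real (n choose nat ((int n + j) div 2)) / 2 ^ n else 0)"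

lemma walk1_nonneg: "0 \<le> walk1 n j"
  unfolding walk1_def by auto

lemma walk1_0: "walk1 0 j = (if j = 0 then 1 else 0)"
  unfolding walk1_def by auto

lemma walk1_odd: "odd (int n + j) \<Longrightarrow> walk1 n j = 0"
  unfolding walk1_def by auto

lemma walk1_outside: "j < - int n \<or> j > int n \<Longrightarrow> walk1 n j = 0"
  unfolding walk1_def by auto

lemma walk1_binomial: "walk1 n (2 * int i - int n) = real (n choose i) / 2 ^ n"
proof (cases "i \<le> n")
  case True
  have "(int n + (2 * int i - int n)) div 2 = int i" by simp
  then show ?thesis unfolding walk1_def using True by auto
qed (simp add: walk1_outside)

lemma walk1_Suc: "walk1 (Suc n) j = (walk1 n (j - 1) + walk1 n (j + 1)) / 2"
proof (cases "even (int n + 1 + j)")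
  case False
  then have "odd (int (Suc n) + j)" "odd (int n + (j - 1))" "odd (int n + (j + 1))" by auto
  then show ?thesis by (simp add: walk1_odd)
next
  case True
  then obtain i :: int where i: "j = 2 * i - int (Suc n)" by (metis evenE add_diff_cancel_left' add.commute of_nat_Suc)
  show ?thesis
  proof (cases "i < 0")
    case True
    then have "j < - int (Suc n)" "j - 1 < - int n" "j + 1 < - int n" using i by auto
    then show ?thesis by (simp add: walk1_outside)
  next
    case False
    then obtain k :: nat where k: "i = int k" by (metis nonneg_int_cases not_less)
    have j: "j = 2 * int k - int (Suc n)" and j1: "j + 1 = 2 * int k - int n" using i k by simp_all
    have lhs: "walk1 (Suc n) j = real (Suc n choose k) / 2 ^ Suc n"
      unfolding j by (rule walk1_binomial)
    have right: "walk1 n (j + 1) = real (n choose k) / 2 ^ n"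
      unfolding j1 by (rule walk1_binomial)
    show ?thesis
    proof (cases k)
      case 0
      then have "j - 1 < - int n" using j by simp
      then show ?thesis using lhs right 0 by (simp add: walk1_outside)
    next
      case (Suc k')
      have "j - 1 = 2 * int k' - int n" using j Suc by simp
      then have left: "walk1 n (j - 1) = real (n choose k') / 2 ^ n" by (simp add: walk1_binomial)
      show ?thesis unfolding lhs left right Suc by (simp add: add_divide_distrib)
    qed
  qed
qed

definition walk1_peak :: "nat \<Rightarrow> real" where
  "walk1_peak n = real (n choose (n div 2)) / 2 ^ n"

lemma walk1_le_peak: "walk1 n j \<le> walk1_peak n"
  unfolding walk1_def walk1_peak_def using binomial_maximum
  by (auto intro!: divide_right_mono)

lemma walk1_peak_Suc_le: "walk1_peak (Suc n) \<le> walk1_peak n"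
proof -
  have "Suc n choose (Suc n div 2) \<le> 2 * (n choose (n div 2))"
  proof (cases "Suc n div 2")
    case (Suc k)
    then have "Suc n choose (Suc n div 2) = (n choose k) + (n choose Suc k)" by simp
    also have "\<dots> \<le> 2 * (n choose (n div 2))"
      using binomial_maximum[of n k] binomial_maximum[of n "Suc k"] by simp
    finally show ?thesis .
  qed simp
  then have "real (Suc n choose (Suc n div 2)) \<le> 2 * real (n choose (n div 2))"
    by (metis of_nat_le_iff of_nat_mult of_nat_numeral)
  then show ?thesis unfolding walk1_peak_def by (simp add: field_simps)
qed

lemma walk1_peak_antimono: "m \<le> n \<Longrightarrow> walk1_peak n \<le> walk1_peak m"
  by (induction n rule: dec_induct) (auto intro: order_trans[OF walk1_peak_Suc_le])

lemma walk1_peak_nonneg: "0 \<le> walk1_peak n"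
  unfolding walk1_peak_def by simp

lemma walk1_le_1: "walk1 n j \<le> 1"
  using walk1_le_peak[of n j] walk1_peak_antimono[of 0 n] unfolding walk1_peak_def[of 0] by simp

text \<open>In the coordinates \<open>a + b\<close> and \<open>a - b\<close> simple random walk on \<open>\<int>\<^sup>2\<close> is a pair of independent
  one-dimensional walks, so \<open>walk2 n a b\<close> is its \<open>n\<close>-step transition probability to the
  displacement \<open>(a, b)\<close>.\<close>

definition walk2 :: "nat \<Rightarrow> int \<Rightarrow> int \<Rightarrow> real" where
  "walk2 n a b = walk1 n (a + b) * walk1 n (a - b)"

lemma walk2_nonneg: "0 \<le> walk2 n a b"
  unfolding walk2_def by (simp add: walk1_nonneg)

lemma walk2_Suc:
  "walk2 (Suc n) a b =
     (walk2 n (a - 1) b + walk2 n (a + 1) b + walk2 n a (b - 1) + walk2 n a (b + 1)) / 4"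
proof -
  have "a - 1 + b = a + b - 1" "a - 1 - b = a - b - 1" "a + 1 + b = a + b + 1"
    "a + 1 - b = a - b + 1" "a + (b - 1) = a + b - 1" "a - (b - 1) = a - b + 1"
    "a + (b + 1) = a + b + 1" "a - (b + 1) = a - b - 1"
    by simp_all
  then show ?thesis unfolding walk2_def walk1_Suc by (simp add: field_simps)
qed

lemma killed_le_walk2: "killed N n x y \<le> walk2 n (fst y - fst x) (snd y - snd x)"
proof (induction n arbitrary: x)
  case 0
  show ?case by (simp add: walk2_def walk1_0 walk2_nonneg prod_eq_iff)
next
  case (Suc n)
  show ?case
  proof (cases "x \<in> intV N")
    case True
    have "killed N (Suc n) x y \<le>
        (walk2 n (fst y - (fst x + 1)) (snd y - snd x) + walk2 n (fst y - (fst x - 1)) (snd y - snd x)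
         + walk2 n (fst y - fst x) (snd y - (snd x + 1)) + walk2 n (fst y - fst x) (snd y - (snd x - 1))) / 4"
      using True Suc.IH[of "(fst x + 1, snd x)"] Suc.IH[of "(fst x - 1, snd x)"]
        Suc.IH[of "(fst x, snd x + 1)"] Suc.IH[of "(fst x, snd x - 1)"] by simp
    also have "\<dots> = walk2 (Suc n) (fst y - fst x) (snd y - snd x)"
      unfolding walk2_Suc by (simp add: algebra_simps diff_diff_eq2)
    finally show ?thesis .
  qed (simp add: walk2_nonneg)
qed

lemma walk2_odd: "odd (int n + a + b) \<Longrightarrow> walk2 n a b = 0"
  unfolding walk2_def using walk1_odd[of n "a + b"] by (simp add: add.assoc)

lemma walk2_le_peak: "walk2 n a b \<le> (walk1_peak (2 * (n div 2)))\<^sup>2"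
proof -
  have "walk1 n j \<le> walk1_peak (2 * (n div 2))" for j
    using walk1_le_peak[of n j] walk1_peak_antimono[of "2 * (n div 2)" n] by simp
  then show ?thesis unfolding walk2_def power2_eq_square
    by (intro mult_mono) (auto simp: walk1_nonneg walk1_peak_nonneg)
qed

lemma cosh_le_1_plus_sq:
  fixes t :: real
  assumes "\<bar>t\<bar> \<le> 1"
  shows "cosh t \<le> 1 + t\<^sup>2"
proof -
  have "exp s + exp (- s) \<le> 2 + 2 * s\<^sup>2" if s: "0 \<le> s" "s \<le> 1" for s :: real
  proof -
    have "exp (- s) * (1 + s) \<le> exp (- s) * exp s" by (intro mult_left_mono) auto
    also have "\<dots> = 1" by (simp add: exp_add[symmetric])
    also have "\<dots> \<le> (1 - s + s\<^sup>2) * (1 + s)"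
      using s by (simp add: power2_eq_square algebra_simps)
    finally have "exp (- s) \<le> 1 - s + s\<^sup>2" using s by (simp add: mult_le_cancel_right_pos)
    then show ?thesis using exp_bound[OF s] by linarith
  qed
  from this[of "\<bar>t\<bar>"] assms show ?thesis
    by (cases "0 \<le> t") (auto simp: cosh_field_def add.commute)
qed

lemma walk1_le_exp_moment: "walk1 n j \<le> cosh l ^ n * exp (- l * real_of_int j)"
proof (induction n arbitrary: j)
  case 0
  then show ?case by (simp add: walk1_0)
next
  case (Suc n)
  have "walk1 (Suc n) j \<le>
      (cosh l ^ n * exp (- l * real_of_int (j - 1)) + cosh l ^ n * exp (- l * real_of_int (j + 1))) / 2"
    unfolding walk1_Suc using Suc.IH[of "j - 1"] Suc.IH[of "j + 1"] by simp
  also have "\<dots> = cosh l ^ Suc n * exp (- l * real_of_int j)"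
  proof -
    have "exp (- l * real_of_int (j - 1)) = exp (- l * real_of_int j) * exp l"
      "exp (- l * real_of_int (j + 1)) = exp (- l * real_of_int j) * exp (- l)"
      by (simp_all add: exp_add[symmetric] algebra_simps)
    then show ?thesis by (simp add: cosh_field_def algebra_simps add_divide_distrib)
  qed
  finally show ?case .
qed

text \<open>Chernoff bound: the exponential moment with \<open>l = j / (2 n)\<close>.\<close>

lemma walk1_gaussian_bound:
  assumes "n \<ge> 1"
  shows "walk1 n j \<le> exp (- (real_of_int j)\<^sup>2 / (4 * real n))"
proof (cases "j < - int n \<or> j > int n")
  case True
  then show ?thesis by (simp add: walk1_outside)
next
  case False
  define l where "l = real_of_int j / (2 * real n)"
  have np: "real n > 0" using assms by simp
  have "\<bar>l\<bar> \<le> 1" unfolding l_def using False np by (auto simp: abs_divide divide_le_eq)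
  then have "cosh l \<le> exp (l\<^sup>2)"
    using cosh_le_1_plus_sq exp_ge_add_one_self[of "l\<^sup>2"] by (smt (verit))
  then have "cosh l ^ n \<le> exp (l\<^sup>2) ^ n"
    by (intro power_mono) (auto intro: order_trans[OF _ cosh_real_ge_1])
  then have "walk1 n j \<le> exp (l\<^sup>2) ^ n * exp (- l * real_of_int j)"
    using walk1_le_exp_moment[of n j l] by (smt (verit) exp_gt_zero mult_right_mono)
  also have "\<dots> = exp (real n * l\<^sup>2 - l * real_of_int j)"
    by (simp add: exp_of_nat_mult[symmetric] exp_diff exp_minus field_simps)
  also have "real n * l\<^sup>2 - l * real_of_int j = - (real_of_int j)\<^sup>2 / (4 * real n)"
    unfolding l_def using np by (simp add: power2_eq_square field_simps)
  finally show ?thesis .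
qed

lemma walk2_gaussian_bound:
  assumes "n \<ge> 1"
  shows "walk2 n a b \<le> exp (- ((real_of_int a)\<^sup>2 + (real_of_int b)\<^sup>2) / (4 * real n))"
proof -
  have "(real_of_int (a + b))\<^sup>2 + (real_of_int (a - b))\<^sup>2 = 2 * ((real_of_int a)\<^sup>2 + (real_of_int b)\<^sup>2)"
    by (simp add: power2_eq_square algebra_simps)
  then obtain j where j: "j = a + b \<or> j = a - b"
    and ab: "(real_of_int a)\<^sup>2 + (real_of_int b)\<^sup>2 \<le> (real_of_int j)\<^sup>2"
    by (smt (verit))
  have "walk2 n a b \<le> walk1 n j"
    using j walk1_le_1 walk1_nonneg unfolding walk2_def
    by (metis mult.commute mult_left_le)
  also have "\<dots> \<le> exp (- (real_of_int j)\<^sup>2 / (4 * real n))"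
    by (rule walk1_gaussian_bound[OF assms])
  also have "\<dots> \<le> exp (- ((real_of_int a)\<^sup>2 + (real_of_int b)\<^sup>2) / (4 * real n))"
  proof -
    have "((real_of_int a)\<^sup>2 + (real_of_int b)\<^sup>2) / (4 * real n) \<le> (real_of_int j)\<^sup>2 / (4 * real n)"
      using ab by (simp add: divide_right_mono)
    then show ?thesis by (simp add: add_divide_distrib diff_divide_distrib)
  qed
  finally show ?thesis .
qed

section \<open>Wallis' product and the central binomial coefficient\<close>

lemma walk1_peak_even: "walk1_peak (2 * k) = real ((2 * k) choose k) / 4 ^ k"
  unfolding walk1_peak_def by (simp add: power_mult)

lemma walk1_peak_even_Suc:
  "walk1_peak (2 * Suc k) = walk1_peak (2 * k) * (2 * real k + 1) / (2 * real k + 2)"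
proof -
  define X where "X = real (Suc (Suc (2 * k)) choose Suc k)"
  define Y where "Y = real (Suc (2 * k) choose k)"
  define C where "C = real ((2 * k) choose k)"
  have "Suc (2 * k) choose Suc k = Suc (2 * k) choose k"
    using binomial_symmetric[of "Suc k" "Suc (2 * k)"] by (simp del: binomial_Suc_Suc)
  then have "(real k + 1) * Y = (2 * real k + 1) * C"
    using arg_cong[where f = real, OF Suc_times_binomial[of k "2 * k"]]
    unfolding Y_def C_def by (simp del: binomial_Suc_Suc add: algebra_simps)
  moreover have "(real k + 1) * X = (2 * real k + 2) * Y"
    using arg_cong[where f = real, OF Suc_times_binomial[of k "Suc (2 * k)"]]
    unfolding X_def Y_def by (simp del: binomial_Suc_Suc add: algebra_simps)
  ultimately have "X * (real k + 1) = C * (4 * real k + 2)"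
    by algebra
  then have XC: "X / 4 * (2 * real k + 2) = C * (2 * real k + 1)"
    by (simp add: algebra_simps)
  have P: "walk1_peak (2 * Suc k) = X / 4 / 4 ^ k" "walk1_peak (2 * k) = C / 4 ^ k"
    unfolding walk1_peak_even X_def C_def by (simp_all del: binomial_Suc_Suc)
  have "walk1_peak (2 * Suc k) * (2 * real k + 2) = X / 4 * (2 * real k + 2) / 4 ^ k"
    unfolding P by simp
  also have "\<dots> = walk1_peak (2 * k) * (2 * real k + 1)"
    unfolding XC P by simp
  finally have "walk1_peak (2 * Suc k) * (2 * real k + 2) = walk1_peak (2 * k) * (2 * real k + 1)" .
  moreover have "2 * real k + 2 \<noteq> 0" by linarith
  ultimately show ?thesis
    by (simp add: field_simps)
qed

definition wallis_product :: "nat \<Rightarrow> real" where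
  "wallis_product k = (\<Prod>j = 1..k. (4 * real j ^ 2) / (4 * real j ^ 2 - 1))"

lemma wallis_product_pos: "wallis_product k > 0"
  unfolding wallis_product_def
proof (intro prod_pos ballI)
  fix j assume "j \<in> {1..k}"
  then have "1 \<le> real j ^ 2" by simp
  then have "0 < 4 * real j ^ 2" "0 < 4 * real j ^ 2 - 1" by linarith+
  then show "4 * real j ^ 2 / (4 * real j ^ 2 - 1) > 0" by simp
qed

lemma wallis_product_walk1_peak:
  "(walk1_peak (2 * k))\<^sup>2 = 1 / ((2 * real k + 1) * wallis_product k)"
proof (induction k)
  case 0
  then show ?case by (simp add: wallis_product_def walk1_peak_def)
next
  case (Suc k)
  have W: "wallis_product (Suc k) =
      wallis_product k * (4 * (real k + 1)\<^sup>2) / ((2 * real k + 1) * (2 * real k + 3))"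
    unfolding wallis_product_def by (simp add: prod.nat_ivl_Suc' power2_eq_square algebra_simps)
  have "(walk1_peak (2 * Suc k))\<^sup>2 = (walk1_peak (2 * k))\<^sup>2 * ((2 * real k + 1) / (2 * real k + 2))\<^sup>2"
    unfolding walk1_peak_even_Suc by (simp add: power_mult_distrib power_divide)
  also have "\<dots> = 1 / ((2 * real (Suc k) + 1) * wallis_product (Suc k))"
    unfolding Suc.IH W using wallis_product_pos[of k]
    by (simp add: power2_eq_square divide_simps) (simp add: algebra_simps)
  finally show ?case .
qed

text \<open>\<open>k (walk1_peak (2 k))\<^sup>2\<close> increases to its limit \<open>1 / \<pi>\<close>, by Wallis' product.\<close>

lemma walk1_peak_sq_le:
  assumes "k \<ge> 1"
  shows "(walk1_peak (2 * k))\<^sup>2 \<le> 1 / (pi * real k)"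
proof -
  define a where "a k = real k * (walk1_peak (2 * k))\<^sup>2" for k
  have "incseq a"
    unfolding incseq_Suc_iff
  proof
    fix k
    have "real k * (2 * real k + 2)\<^sup>2 \<le> (real k + 1) * (2 * real k + 1)\<^sup>2"
      by (simp add: power2_eq_square algebra_simps)
    then have "real k \<le> (real k + 1) * ((2 * real k + 1) / (2 * real k + 2))\<^sup>2"
      by (simp add: power_divide le_divide_eq)
    from mult_right_mono[OF this zero_le_power2[of "walk1_peak (2 * k)"]]
    show "a k \<le> a (Suc k)"
      unfolding a_def walk1_peak_even_Suc by (simp add: power2_eq_square field_simps)
  qed
  moreover have "a \<longlonglongrightarrow> (1 / 2) / (pi / 2)"
  proof -
    have a_eq: "a k = real k / (2 * real k + 1) / wallis_product k" for k
      unfolding a_def wallis_product_walk1_peak by simp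
    have "(\<lambda>k. real k / (2 * real k + 1)) \<longlonglongrightarrow> 1 / 2"
      by real_asymp
    moreover have "wallis_product \<longlonglongrightarrow> pi / 2"
      using wallis unfolding wallis_product_def .
    ultimately show ?thesis
      unfolding a_eq by (rule tendsto_divide) simp
  qed
  ultimately have "a k \<le> 1 / pi"
    using incseq_le by fastforce
  then show ?thesis unfolding a_def using assms by (simp add: field_simps)
qed

lemma sum_pairs:
  fixes g :: "nat \<Rightarrow> 'a :: comm_monoid_add" and a b :: nat
  assumes "a \<le> b"
  shows "(\<Sum>n\<in>{2 * a..<2 * b}. g n) = (\<Sum>k\<in>{a..<b}. g (2 * k) + g (2 * k + 1))"
  using assms
proof (induction b rule: dec_induct)
  case base then show ?case by simp
next
  case (step b)
  have "{2 * a..<2 * Suc b} = insert (2 * b + 1) (insert (2 * b) {2 * a..<2 * b})"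
    using step by auto
  then have "(\<Sum>n\<in>{2 * a..<2 * Suc b}. g n) = g (2 * b + 1) + g (2 * b) + (\<Sum>n\<in>{2 * a..<2 * b}. g n)"
    by (simp add: add.assoc)
  then show ?case using step by (simp add: ac_simps)
qed

lemma sum_parity_le:
  fixes g W :: "nat \<Rightarrow> real"
  assumes g0: "\<And>n. 0 \<le> g n" and gW: "\<And>n. g n \<le> W (n div 2)"
    and par: "\<And>n. odd (int n + p) \<Longrightarrow> g n = 0"
  shows "(\<Sum>n\<in>{n0..<T}. g n) \<le> (\<Sum>k\<in>{n0 div 2..<T}. W k)"
proof (cases "n0 div 2 \<le> T")
  case False
  then have "{n0..<T} = {}" by auto
  moreover have "{n0 div 2..<T} = {}" using False by auto
  ultimately show ?thesis by simp
next
  case True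
  have "(\<Sum>n\<in>{n0..<T}. g n) \<le> (\<Sum>n\<in>{2 * (n0 div 2)..<2 * T}. g n)"
    by (intro sum_mono2) (auto simp: g0)
  also have "\<dots> = (\<Sum>k\<in>{n0 div 2..<T}. g (2 * k) + g (2 * k + 1))"
    by (rule sum_pairs[OF True])
  also have "\<dots> \<le> (\<Sum>k\<in>{n0 div 2..<T}. W k)"
  proof (intro sum_mono)
    fix k
    have a: "g (2 * k) \<le> W k" using gW[of "2 * k"] by simp
    have b: "g (2 * k + 1) \<le> W k" using gW[of "2 * k + 1"] by simp
    show "g (2 * k) + g (2 * k + 1) \<le> W k"
    proof (cases "odd (int (2 * k) + p)")
      case True then show ?thesis using par[of "2 * k"] b by simp
    next
      case False then have "odd (int (2 * k + 1) + p)" by simp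
      then show ?thesis using par[of "2 * k + 1"] a by simp
    qed
  qed
  finally show ?thesis .
qed

lemma sum_inverse_le_ln:
  assumes "2 \<le> a" "a \<le> b"
  shows "(\<Sum>k\<in>{a..<b}. 1 / real k) \<le> ln (real b - 1) - ln (real a - 1)"
  using assms(2)
proof (induction b rule: dec_induct)
  case base then show ?case by simp
next
  case (step b)
  have b2: "real b \<ge> 2" using step assms by simp
  have "ln ((real b - 1) / real b) \<le> (real b - 1) / real b - 1"
    by (rule ln_le_minus_one) (use b2 in simp)
  also have "\<dots> = - 1 / real b" using b2 by (simp add: field_simps)
  finally have "1 / real b \<le> ln (real b) - ln (real b - 1)"
    using b2 by (simp add: ln_div)
  then show ?case using step by simp
qed

lemma sum_walk2_le: "(\<Sum>n\<in>{n0..<T}. walk2 n a b) \<le> (\<Sum>k\<in>{n0 div 2..<T}. (walk1_peak (2 * k))\<^sup>2)"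
proof (rule sum_parity_le[where p = "a + b"])
  show "0 \<le> walk2 n a b" for n by (rule walk2_nonneg)
  show "walk2 n a b \<le> (walk1_peak (2 * (n div 2)))\<^sup>2" for n by (rule walk2_le_peak)
  show "odd (int n + (a + b)) \<Longrightarrow> walk2 n a b = 0" for n using walk2_odd[of n a b] by (simp add: add.assoc)
qed

lemma sum_walk1_peak_sq_le_ln:
  assumes "2 \<le> k0" "k0 \<le> T"
  shows "(\<Sum>k\<in>{k0..<T}. (walk1_peak (2 * k))\<^sup>2) \<le> (ln (real T - 1) - ln (real k0 - 1)) / pi"
proof -
  have "(\<Sum>k\<in>{k0..<T}. (walk1_peak (2 * k))\<^sup>2) \<le> (\<Sum>k\<in>{k0..<T}. 1 / real k / pi)"
  proof (intro sum_mono)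
    fix k assume "k \<in> {k0..<T}"
    then have "k \<ge> 1" using assms by simp
    then show "(walk1_peak (2 * k))\<^sup>2 \<le> 1 / real k / pi" using walk1_peak_sq_le[of k] by (simp add: mult.commute)
  qed
  also have "\<dots> = (\<Sum>k\<in>{k0..<T}. 1 / real k) / pi" by (simp add: sum_divide_distrib)
  also have "\<dots> \<le> (ln (real T - 1) - ln (real k0 - 1)) / pi"
    by (intro divide_right_mono sum_inverse_le_ln assms) simp
  finally show ?thesis .
qed

lemma sum_walk1_peak_sq_le:
  assumes "2 \<le> T"
  shows "(\<Sum>k<T. (walk1_peak (2 * k))\<^sup>2) \<le> 1 + (1 + ln (real T)) / pi"
proof -
  have split: "{..<T} = insert 0 (insert 1 {2..<T})" using assms by auto
  have c0: "walk1_peak 0 = 1" by (simp add: walk1_peak_def)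
  have c1: "(walk1_peak 2)\<^sup>2 \<le> 1 / pi" using walk1_peak_sq_le[of 1] by simp
  have "(\<Sum>k<T. (walk1_peak (2 * k))\<^sup>2) = 1 + (walk1_peak 2)\<^sup>2 + (\<Sum>k\<in>{2..<T}. (walk1_peak (2 * k))\<^sup>2)"
    unfolding split by (simp add: c0)
  also have "\<dots> \<le> 1 + 1 / pi + (ln (real T - 1) - ln (real 2 - 1)) / pi"
    using c1 sum_walk1_peak_sq_le_ln[of 2 T] assms by simp
  also have "\<dots> \<le> 1 + (1 + ln (real T)) / pi"
  proof -
    have "ln (real T - 1) \<le> ln (real T)" using assms by simp
    then show ?thesis by (simp add: add_divide_distrib divide_right_mono)
  qed
  finally show ?thesis .
qed


section \<open>Bounds on the Green function\<close>

definition green_max :: "nat \<Rightarrow> real" where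
  "green_max N = Max ((\<lambda>(w, z). green N w z) ` (intV N \<times> intV N))"

lemma green_le_green_max: "w \<in> intV N \<Longrightarrow> z \<in> intV N \<Longrightarrow> green N w z \<le> green_max N"
  unfolding green_max_def by (rule Max_ge) (auto simp: finite_intV)

lemma green_max_attained:
  assumes "intV N \<noteq> {}"
  obtains w z where "w \<in> intV N" "z \<in> intV N" "green_max N = green N w z"
proof -
  have "green_max N \<in> (\<lambda>(w, z). green N w z) ` (intV N \<times> intV N)"
    unfolding green_max_def by (rule Max_in) (use assms finite_intV in auto)
  then show ?thesis using that by auto
qed

lemma survival_le_inverse:
  assumes "N \<ge> 1" "R \<ge> 1"
  shows "survival N (2 * R * N\<^sup>2) x \<le> 1 / real R"
proof -
  have "real R * (2 * (real N)\<^sup>2) * survival N (2 * R * N\<^sup>2) x \<le> 1 * (2 * (real N)\<^sup>2)"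
    using survival_le[of "2 * R * N\<^sup>2" N x] by (simp add: mult_ac)
  then have "real R * survival N (2 * R * N\<^sup>2) x \<le> 1"
    using assms by (simp add: mult_ac)
  then show ?thesis using assms by (simp add: field_simps)
qed

lemma green_le_sum_walk2:
  assumes "N \<ge> 1" "R \<ge> 1" "x \<in> intV N" "y \<in> intV N"
  shows "green N x y \<le> (\<Sum>n<2 * R * N\<^sup>2. walk2 n (fst y - fst x) (snd y - snd x)) + green_max N / real R"
proof -
  let ?T = "2 * R * N\<^sup>2"
  have "green N x y \<le> (\<Sum>n<?T. killed N n x y) + survival N ?T x * green_max N"
    by (rule green_le_split) (rule green_le_green_max[OF _ assms(4)])
  also have "\<dots> \<le> (\<Sum>n<?T. walk2 n (fst y - fst x) (snd y - snd x)) + 1 / real R * green_max N"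
  proof (intro add_mono sum_mono killed_le_walk2 mult_right_mono survival_le_inverse assms)
    show "0 \<le> green_max N"
      using green_le_green_max[OF assms(3) assms(3)] green_nonneg[of N x x] by linarith
  qed
  finally show ?thesis by simp
qed

lemma green_max_le:
  assumes "N \<ge> 1" "R \<ge> 2" "intV N \<noteq> {}"
  shows "green_max N \<le> real R / (real R - 1) * (1 + (1 + ln (real (2 * R * N\<^sup>2))) / pi)"
proof -
  let ?T = "2 * R * N\<^sup>2"
  let ?D = "1 + (1 + ln (real ?T)) / pi"
  have "2 \<le> ?T" using assms by (simp add: one_le_mult_iff one_le_power)
  have "green N w z \<le> ?D + green_max N / real R" if "w \<in> intV N" "z \<in> intV N" for w z
  proof -
    have "(\<Sum>n<?T. walk2 n (fst z - fst w) (snd z - snd w)) \<le> (\<Sum>k<?T. (walk1_peak (2 * k))\<^sup>2)"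
      using sum_walk2_le[of _ _ 0 ?T] by (simp add: atLeast0LessThan)
    also have "\<dots> \<le> ?D" by (rule sum_walk1_peak_sq_le[OF \<open>2 \<le> ?T\<close>])
    finally show ?thesis using green_le_sum_walk2[of N R w z] assms that by simp
  qed
  moreover obtain w z where "w \<in> intV N" "z \<in> intV N" "green_max N = green N w z"
    using green_max_attained[OF assms(3)] by blast
  ultimately have "green_max N \<le> ?D + green_max N / real R" by simp
  then have "green_max N * (real R - 1) \<le> ?D * real R" using assms by (simp add: field_simps)
  then show ?thesis using assms by (simp add: field_simps)
qed

lemma ptnorm_sq:
  "(ptnorm (x - y))\<^sup>2 = (real_of_int (fst y - fst x))\<^sup>2 + (real_of_int (snd y - snd x))\<^sup>2"
  unfolding ptnorm_def by (simp add: power2_commute)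

lemma ptnorm_minus_commute: "ptnorm (y - x) = ptnorm (x - y)"
  unfolding ptnorm_def by (simp add: power2_commute)

text \<open>Off the diagonal, the free walk needs time of order \<open>r\<^sup>2\<close> to travel the distance \<open>r\<close>,
  so only the times \<open>n \<ge> n\<^sub>0\<close> contribute to the logarithmic term.\<close>

lemma green_offdiag_le:
  assumes "N \<ge> 1" "R \<ge> 2" "x \<in> intV N" "y \<in> intV N" "x \<noteq> y"
    and n0: "4 \<le> n0" "n0 \<le> 2 * R * N\<^sup>2"
  shows "green N x y \<le> real n0 * exp (- (ptnorm (x - y))\<^sup>2 / (4 * real n0))
     + (ln (real (2 * R * N\<^sup>2) - 1) - ln (real (n0 div 2) - 1)) / pi + green_max N / real R"
proof -
  let ?T = "2 * R * N\<^sup>2" and ?a = "fst y - fst x" and ?b = "snd y - snd x"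
  let ?r = "(ptnorm (x - y))\<^sup>2"
  have "(\<Sum>n<?T. walk2 n ?a ?b) = (\<Sum>n<n0. walk2 n ?a ?b) + (\<Sum>n\<in>{n0..<?T}. walk2 n ?a ?b)"
    using sum.atLeastLessThan_concat[of 0 n0 ?T "\<lambda>n. walk2 n ?a ?b"] n0
    by (simp add: atLeast0LessThan)
  also have "(\<Sum>n<n0. walk2 n ?a ?b) \<le> (\<Sum>n<n0. exp (- ?r / (4 * real n0)))"
  proof (intro sum_mono)
    fix n assume "n \<in> {..<n0}"
    show "walk2 n ?a ?b \<le> exp (- ?r / (4 * real n0))"
    proof (cases "n = 0")
      case True
      have "?a \<noteq> 0 \<or> ?b \<noteq> 0" using \<open>x \<noteq> y\<close> by (auto simp: prod_eq_iff)
      then show ?thesis using True by (auto simp: walk2_def walk1_0)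
    next
      case False
      then have "walk2 n ?a ?b \<le> exp (- ?r / (4 * real n))"
        using walk2_gaussian_bound[of n ?a ?b] by (simp add: ptnorm_sq)
      also have "\<dots> \<le> exp (- ?r / (4 * real n0))"
        using False \<open>n \<in> {..<n0}\<close>
        by (simp add: frac_le zero_le_power2 minus_divide_left[symmetric] del: minus_divide_left)
      finally show ?thesis .
    qed
  qed
  also have "(\<Sum>n\<in>{n0..<?T}. walk2 n ?a ?b) \<le> (\<Sum>k\<in>{n0 div 2..<?T}. (walk1_peak (2 * k))\<^sup>2)"
    by (rule sum_walk2_le)
  also have "\<dots> \<le> (ln (real ?T - 1) - ln (real (n0 div 2) - 1)) / pi"
    by (rule sum_walk1_peak_sq_le_ln) (use n0 in auto)
  finally show ?thesis
    using green_le_sum_walk2[of N R x y] assms by simp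
qed

lemma green_max_le_ln:
  assumes "N \<ge> 1" "R \<ge> 2" "intV N \<noteq> {}"
  shows "green_max N \<le> real R / (real R - 1) * (gconst * ln (real N) + 1 + (1 + ln (2 * real R)) / pi)"
proof -
  have "ln (real (2 * R * N\<^sup>2)) = ln (2 * real R) + 2 * ln (real N)"
    using assms by (simp add: ln_mult ln_realpow)
  then have "1 + (1 + ln (real (2 * R * N\<^sup>2))) / pi = gconst * ln (real N) + 1 + (1 + ln (2 * real R)) / pi"
    unfolding gconst_def by (simp add: field_simps)
  then show ?thesis using green_max_le[OF assms] by metis
qed

lemma green_offdiag_le_ln:
  assumes "N \<ge> 1" "R \<ge> 2" "x \<in> intV N" "y \<in> intV N" "a \<le> 2" and big: "16 \<le> real N powr a"
    and far: "real N powr a * exp (- (ptnorm (x - y))\<^sup>2 / (4 * real N powr a)) \<le> 1"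
  shows "green N x y \<le> (1 - a / 2) * gconst * ln (real N) + 1 + ln (16 * real R) / pi + green_max N / real R"
proof -
  let ?A = "real N powr a" and ?r = "(ptnorm (x - y))\<^sup>2"
  define n0 where "n0 = nat \<lfloor>?A\<rfloor>"
  have n0: "real n0 \<le> ?A" "?A - 1 < real n0" unfolding n0_def using big by linarith+
  have "x \<noteq> y"
    using far big by (auto simp: ptnorm_def)
  have "real n0 \<le> real (2 * R * N\<^sup>2)"
  proof -
    have "?A \<le> real N powr 2" using assms by (intro powr_mono) auto
    also have "\<dots> \<le> real (2 * R * N\<^sup>2)" using assms by (simp add: powr_realpow)
    finally show ?thesis using n0 by linarith
  qed
  then have n0_le: "n0 \<le> 2 * R * N\<^sup>2" by linarith
  have "real n0 * exp (- ?r / (4 * real n0)) \<le> ?A * exp (- ?r / (4 * ?A))"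
    using n0 big assms by (intro mult_mono) (auto intro!: divide_left_mono mult_pos_pos)
  then have first: "real n0 * exp (- ?r / (4 * real n0)) \<le> 1" using far by linarith
  have "?A / 8 \<le> real (n0 div 2) - 1" using n0 big by linarith
  then have "ln (?A / 8) \<le> ln (real (n0 div 2) - 1)"
    by (rule ln_mono) (use big assms in simp)
  moreover have "2 \<le> real (2 * R * N\<^sup>2)"
    using assms by (simp add: one_le_mult_iff one_le_power del: of_nat_mult of_nat_power)
  then have "ln (real (2 * R * N\<^sup>2) - 1) \<le> ln (real (2 * R * N\<^sup>2))" by simp
  ultimately have "ln (real (2 * R * N\<^sup>2) - 1) - ln (real (n0 div 2) - 1) \<le> ln (real (2 * R * N\<^sup>2)) - ln (?A / 8)"
    by linarith
  also have "\<dots> = ln (16 * real R) + (2 - a) * ln (real N)"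
    using assms ln_mult[of 2 8] by (simp add: ln_mult ln_div ln_realpow ln_powr algebra_simps)
  finally have "(ln (real (2 * R * N\<^sup>2) - 1) - ln (real (n0 div 2) - 1)) / pi
      \<le> (ln (16 * real R) + (2 - a) * ln (real N)) / pi"
    by (rule divide_right_mono) simp
  also have "\<dots> = (1 - a / 2) * gconst * ln (real N) + ln (16 * real R) / pi"
    unfolding gconst_def by (simp add: field_simps)
  finally have second: "(ln (real (2 * R * N\<^sup>2) - 1) - ln (real (n0 div 2) - 1)) / pi
      \<le> (1 - a / 2) * gconst * ln (real N) + ln (16 * real R) / pi" .
  have "15 < real n0" using n0 big by linarith
  then have "4 \<le> n0" by simp
  then show ?thesis
    using green_offdiag_le[OF assms(1-4) \<open>x \<noteq> y\<close> _ n0_le] first second by linarith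
qed

lemma green_pair_sum_le_explicit:
  assumes "N \<ge> 1" "R \<ge> 2" "x \<in> intV N" "y \<in> intV N" "a \<le> 2" "16 \<le> real N powr a"
    and "real N powr a * exp (- (ptnorm (x - y))\<^sup>2 / (4 * real N powr a)) \<le> 1"
  shows "green N x x + green N x y + green N y x + green N y y
     \<le> gconst * (4 - a + 4 / (real R - 1)) * ln (real N)
       + 2 * (real R + 1) / (real R - 1) * (1 + (1 + ln (2 * real R)) / pi)
       + 2 * (1 + ln (16 * real R) / pi)"
proof -
  let ?L = "gconst * ln (real N)" and ?M = "green_max N"
  let ?c1 = "1 + ln (16 * real R) / pi" and ?c2 = "1 + (1 + ln (2 * real R)) / pi"
  have R1: "real R - 1 > 0" using assms by simp
  have "green N x y \<le> (1 - a / 2) * gconst * ln (real N) + 1 + ln (16 * real R) / pi + ?M / real R"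
    by (rule green_offdiag_le_ln[OF assms])
  moreover have "green N y x \<le> (1 - a / 2) * gconst * ln (real N) + 1 + ln (16 * real R) / pi + ?M / real R"
    by (rule green_offdiag_le_ln[OF assms(1,2,4,3,5,6)]) (use assms(7) in \<open>simp add: ptnorm_minus_commute\<close>)
  moreover have "green N x x \<le> ?M" "green N y y \<le> ?M"
    using assms green_le_green_max by auto
  ultimately have "green N x x + green N x y + green N y x + green N y y
      \<le> 2 * ((1 + 1 / real R) * ?M) + (2 - a) * ?L + 2 * ?c1"
    by (simp add: algebra_simps)
  also have "\<dots> \<le> 2 * ((1 + 1 / real R) * (real R / (real R - 1) * (?L + ?c2))) + (2 - a) * ?L + 2 * ?c1"
    using green_max_le_ln[of N R] assms
    by (intro add_mono mult_left_mono) (auto simp: add_ac gconst_def)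
  also have "\<dots> = gconst * (4 - a + 4 / (real R - 1)) * ln (real N)
       + 2 * (real R + 1) / (real R - 1) * ?c2 + 2 * ?c1"
  proof -
    define t where "t = 2 / (real R - 1)"
    have "(1 + 1 / real R) * (real R / (real R - 1) * (?L + ?c2)) = (1 + t) * (?L + ?c2)"
      "4 / (real R - 1) = 2 * t" "2 * (real R + 1) / (real R - 1) = 2 * (1 + t)"
      unfolding t_def using R1 by (simp_all add: field_simps)
    then show ?thesis by (simp add: algebra_simps)
  qed
  finally show ?thesis .
qed

lemma green_pair_sum_le:
  assumes "0 < \<theta>" "\<theta> \<le> 2" "0 < \<eta>"
  shows "\<exists>c N1. \<forall>N \<ge> N1. \<forall>x \<in> intV N. \<forall>y \<in> intV N. real N powr \<theta> \<le> (ptnorm (x - y))\<^sup>2 \<longrightarrow>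
     green N x x + green N x y + green N y x + green N y y \<le> gconst * (4 - \<theta> + \<eta>) * ln (real N) + c"
proof -
  define \<eta>' where "\<eta>' = min \<eta> \<theta>"
  define a where "a = \<theta> - \<eta>' / 2"
  define R :: nat where "R = nat \<lceil>8 / \<eta>'\<rceil> + 2"
  have \<eta>': "0 < \<eta>'" "\<eta>' \<le> \<eta>" "\<eta>' \<le> \<theta>" unfolding \<eta>'_def using assms by auto
  have a: "0 < a" "a \<le> 2" unfolding a_def using \<eta>' assms by auto
  have R: "R \<ge> 2" "4 / (real R - 1) \<le> \<eta>' / 2"
  proof -
    show "R \<ge> 2" by (simp add: R_def)
    have "8 / \<eta>' \<le> real R - 1" unfolding R_def by linarith
    then show "4 / (real R - 1) \<le> \<eta>' / 2" using \<eta>' \<open>R \<ge> 2\<close> by (simp add: field_simps)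
  qed
  have "eventually (\<lambda>N. 16 \<le> real N powr a \<and> real N powr a * exp (- (real N powr (\<eta>' / 2)) / 4) \<le> 1)
      sequentially"
    using a \<eta>' by (intro eventually_conj) real_asymp+
  then obtain N1 where N1: "\<And>N. N \<ge> N1 \<Longrightarrow>
      16 \<le> real N powr a \<and> real N powr a * exp (- (real N powr (\<eta>' / 2)) / 4) \<le> 1"
    unfolding eventually_sequentially by blast
  define c where "c = 2 * (real R + 1) / (real R - 1) * (1 + (1 + ln (2 * real R)) / pi)
       + 2 * (1 + ln (16 * real R) / pi)"
  have "green N x x + green N x y + green N y x + green N y y \<le> gconst * (4 - \<theta> + \<eta>) * ln (real N) + c"
    if N: "N \<ge> max N1 1" and xy: "x \<in> intV N" "y \<in> intV N" "real N powr \<theta> \<le> (ptnorm (x - y))\<^sup>2"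
    for N x y
  proof -
    have big: "16 \<le> real N powr a" and small: "real N powr a * exp (- (real N powr (\<eta>' / 2)) / 4) \<le> 1"
      using N1[of N] N by auto
    have "real N powr \<theta> = real N powr a * real N powr (\<eta>' / 2)"
      unfolding a_def by (simp flip: powr_add)
    then have "- (ptnorm (x - y))\<^sup>2 / (4 * real N powr a) \<le> - (real N powr (\<eta>' / 2)) / 4"
    proof -
      have "0 < real N powr a" using big by linarith
      then show ?thesis using xy \<open>real N powr \<theta> = _\<close> by (simp add: pos_le_divide_eq mult.commute)
    qed
    then have "real N powr a * exp (- (ptnorm (x - y))\<^sup>2 / (4 * real N powr a)) \<le> 1"
      using small big by (smt (verit) exp_mono mult_left_mono)
    then have "green N x x + green N x y + green N y x + green N y y
        \<le> gconst * (4 - a + 4 / (real R - 1)) * ln (real N) + c"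
      unfolding c_def using green_pair_sum_le_explicit[of N R x y a] N xy R a big by simp
    also have "\<dots> \<le> gconst * (4 - \<theta> + \<eta>) * ln (real N) + c"
    proof -
      have "4 - a + 4 / (real R - 1) \<le> 4 - \<theta> + \<eta>" using R \<eta>' unfolding a_def by linarith
      then show ?thesis
        using N by (intro add_right_mono mult_right_mono mult_left_mono) (auto simp: gconst_def)
    qed
    finally show ?thesis .
  qed
  then show ?thesis by blast
qed

section \<open>Gaussian tails\<close>

lemma normal_density_tail_le:
  fixes \<sigma> s :: real
  assumes "0 < \<sigma>" "\<sigma> \<le> s"
  shows "(\<integral>\<^sup>+x. ennreal (normal_density 0 \<sigma> x) * indicator {s..} x \<partial>lborel)
         \<le> ennreal (exp (- s\<^sup>2 / (2 * \<sigma>\<^sup>2)))"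
proof -
  have s: "0 < s" using assms by linarith
  define f where "f x = x / s * normal_density 0 \<sigma> x" for x
  define F where "F x = - (\<sigma>\<^sup>2 / s) * normal_density 0 \<sigma> x" for x
  have "(\<integral>\<^sup>+x. ennreal (normal_density 0 \<sigma> x) * indicator {s..} x \<partial>lborel)
     \<le> (\<integral>\<^sup>+x. ennreal (f x) * indicator {s..} x \<partial>lborel)"
  proof (intro nn_integral_mono)
    fix x
    have "s \<le> x \<Longrightarrow> normal_density 0 \<sigma> x \<le> f x"
      unfolding f_def using s mult_right_mono[of 1 "x / s" "normal_density 0 \<sigma> x"]
      by (simp add: normal_density_nonneg)
    then show "ennreal (normal_density 0 \<sigma> x) * indicator {s..} x \<le> ennreal (f x) * indicator {s..} x"
      by (simp add: ennreal_leI indicator_def)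
  qed
  also have "\<dots> = ennreal (0 - F s)"
  proof (rule nn_integral_FTC_atLeast)
    show "f \<in> borel_measurable borel" unfolding f_def by measurable
    show "(F has_real_derivative f x) (at x)" for x
      unfolding F_def f_def normal_density_def
      by (rule derivative_eq_intros refl | use assms in \<open>simp add: power2_eq_square field_simps\<close>)+
    show "0 \<le> f x" if "s \<le> x" for x
      unfolding f_def using that s by (simp add: normal_density_nonneg)
    show "(F \<longlongrightarrow> 0) at_top"
      unfolding F_def normal_density_def using assms by real_asymp
  qed
  also have "0 - F s = \<sigma> / (s * sqrt (2 * pi)) * exp (- s\<^sup>2 / (2 * \<sigma>\<^sup>2))"
    unfolding F_def normal_density_def using assms
    by (simp add: real_sqrt_mult power2_eq_square field_simps)
  also have "\<dots> \<le> exp (- s\<^sup>2 / (2 * \<sigma>\<^sup>2))"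
  proof -
    have "s \<le> s * sqrt (2 * pi)" using s pi_gt3 by (simp add: mult_le_cancel_left1)
    then have "\<sigma> \<le> s * sqrt (2 * pi)" using assms by linarith
    then have "\<sigma> / (s * sqrt (2 * pi)) \<le> 1" using assms s by (simp add: divide_le_eq_1)
    then show ?thesis using assms s by (intro mult_left_le_one_le) auto
  qed
  finally show ?thesis by (simp add: ennreal_leI)
qed

lemma centered_gaussian_tail_le:
  assumes "prob_space M" "centered_gaussian M X v" "v \<le> V" "V \<le> s\<^sup>2" "0 < s"
  shows "measure M {\<omega> \<in> space M. s \<le> X \<omega>} \<le> exp (- s\<^sup>2 / (2 * V))"
proof -
  interpret prob_space M by (rule assms(1))
  have "0 \<le> v" using assms(2) unfolding centered_gaussian_def by auto
  show ?thesis
  proof (cases "v = 0")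
    case True
    then have "AE \<omega> in M. X \<omega> = 0" using assms(2) unfolding centered_gaussian_def by simp
    then have "AE \<omega> in M. \<not> s \<le> X \<omega>" by eventually_elim (use assms in simp)
    then have "emeasure M {\<omega> \<in> space M. s \<le> X \<omega>} = 0" by (rule emeasure_eq_0_AE)
    then show ?thesis by (simp add: measure_def)
  next
    case False
    then have v: "0 < v" using \<open>0 \<le> v\<close> by simp
    have "distributed M lborel X (normal_density 0 (sqrt v))"
      using assms(2) False unfolding centered_gaussian_def by simp
    then have "emeasure M {\<omega> \<in> space M. s \<le> X \<omega>}
        = (\<integral>\<^sup>+x. ennreal (normal_density 0 (sqrt v) x) * indicator {s..} x \<partial>lborel)"
      by (subst distributed_emeasure[symmetric]) (auto intro: arg_cong[where f = "emeasure M"])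
    also have "\<dots> \<le> ennreal (exp (- s\<^sup>2 / (2 * (sqrt v)\<^sup>2)))"
      using v assms by (intro normal_density_tail_le) (auto intro: real_le_lsqrt)
    finally have "measure M {\<omega> \<in> space M. s \<le> X \<omega>} \<le> exp (- s\<^sup>2 / (2 * v))"
      using v by (simp add: emeasure_eq_measure ennreal_le_iff)
    also have "\<dots> \<le> exp (- s\<^sup>2 / (2 * V))"
      using v assms by (simp add: frac_le)
    finally show ?thesis .
  qed
qed

lemma dgff_sum_gaussian:
  assumes "is_dgff M N \<Phi>" "x \<in> intV N" "y \<in> intV N" "x \<noteq> y"
  shows "centered_gaussian M (\<lambda>\<omega>. \<Phi> x \<omega> + \<Phi> y \<omega>)
           (green N x x + green N x y + green N y x + green N y y)"
proof -
  define c where "c z = (if z \<in> {x, y} then 1 else 0 :: real)" for z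
  have pick: "(\<Sum>z\<in>intV N. c z * f z) = f x + f y" for f :: "pt \<Rightarrow> real"
  proof -
    have "(\<Sum>z\<in>intV N. c z * f z) = (\<Sum>z\<in>intV N \<inter> {x, y}. f z)"
      unfolding c_def sum.inter_restrict[OF finite_intV] by (intro sum.cong) auto
    also have "intV N \<inter> {x, y} = {x, y}" using assms by auto
    finally show ?thesis using assms by simp
  qed
  have "(\<Sum>z\<in>intV N. \<Sum>w\<in>intV N. c z * c w * green N z w)
      = (\<Sum>z\<in>intV N. c z * (\<Sum>w\<in>intV N. c w * green N z w))"
    by (simp add: sum_distrib_left mult.assoc)
  also have "\<dots> = green N x x + green N x y + green N y x + green N y y"
    unfolding pick by simp
  moreover have "centered_gaussian M (\<lambda>\<omega>. \<Sum>z\<in>intV N. c z * \<Phi> z \<omega>)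
      (\<Sum>z\<in>intV N. \<Sum>w\<in>intV N. c z * c w * green N z w)"
    using assms(1) unfolding is_dgff_def by blast
  ultimately show ?thesis
    unfolding pick by simp
qed

lemma dgff_two_point_tail_le:
  assumes "is_dgff M N \<Phi>" "x \<in> intV N" "y \<in> intV N" "x \<noteq> y" "0 < t"
    and "green N x x + green N x y + green N y x + green N y y \<le> V" "V \<le> 4 * t\<^sup>2"
  shows "measure M {\<omega> \<in> space M. t \<le> \<Phi> x \<omega> \<and> t \<le> \<Phi> y \<omega>} \<le> exp (- 2 * t\<^sup>2 / V)"
proof -
  interpret prob_space M using assms(1) unfolding is_dgff_def by blast
  have "\<Phi> x \<in> borel_measurable M" "\<Phi> y \<in> borel_measurable M"
    using assms(1) unfolding is_dgff_def by blast+
  then have "measure M {\<omega> \<in> space M. t \<le> \<Phi> x \<omega> \<and> t \<le> \<Phi> y \<omega>}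
      \<le> measure M {\<omega> \<in> space M. 2 * t \<le> \<Phi> x \<omega> + \<Phi> y \<omega>}"
    by (intro finite_measure_mono) auto
  also have "\<dots> \<le> exp (- (2 * t)\<^sup>2 / (2 * V))"
    using assms by (intro centered_gaussian_tail_le[OF prob_space_axioms dgff_sum_gaussian])
      (auto simp: power_mult_distrib)
  also have "- (2 * t)\<^sup>2 / (2 * V) = - 2 * t\<^sup>2 / V"
    by (simp add: power_mult_distrib)
  finally show ?thesis .
qed

lemma neg_sq_div_affine_le:
  fixes L D k c :: real
  assumes "0 < D" "0 < D * L + k" "0 \<le> c"
  shows "- (c * L\<^sup>2 / (D * L + k)) \<le> c * k / D\<^sup>2 - c / D * L"
proof -
  have "(D * L + k) * (L / D - k / D\<^sup>2) = L\<^sup>2 - k\<^sup>2 / D\<^sup>2"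
    using assms by (simp add: power2_eq_square field_simps)
  also have "\<dots> \<le> L\<^sup>2" by simp
  finally have "L / D - k / D\<^sup>2 \<le> L\<^sup>2 / (D * L + k)"
    using assms by (simp add: le_divide_eq mult.commute)
  from mult_left_mono[OF this assms(3)] show ?thesis
    by (simp add: algebra_simps)
qed

text \<open>With the variance bound \<open>V = g D L + c\<close>, \<open>L = ln N\<close>, the Gaussian tail at the level
  \<open>2 \<surd>g \<alpha> L\<close> of \<open>HN\<close> is \<open>exp (- 8 g \<alpha>\<^sup>2 L\<^sup>2 / V) \<le> C N\<^bsup>-8 \<alpha>\<^sup>2 / D\<^esup>\<close>.\<close>

lemma dgff_high_pair_prob_le_powr:
  assumes "is_dgff M N \<Phi>" "x \<in> intV N" "y \<in> intV N" "x \<noteq> y" "N \<ge> 2" "0 < \<alpha>" "0 < D"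
    and var: "green N x x + green N x y + green N y x + green N y y \<le> gconst * D * ln (real N) + c"
    and pos: "0 < gconst * D * ln (real N) + c"
    and small: "gconst * D * ln (real N) + c \<le> 16 * gconst * \<alpha>\<^sup>2 * (ln (real N))\<^sup>2"
  shows "measure M {\<omega> \<in> space M. x \<in> HN N l \<alpha> \<Phi> \<omega> \<and> y \<in> HN N l \<alpha> \<Phi> \<omega>}
         \<le> exp (8 * \<alpha>\<^sup>2 * c / (gconst * D\<^sup>2)) * real N powr (- 8 * \<alpha>\<^sup>2 / D)"
proof -
  interpret prob_space M using assms(1) unfolding is_dgff_def by blast
  let ?L = "ln (real N)" and ?g = gconst
  have g: "0 < ?g" by (simp add: gconst_def)
  have L: "0 < ?L" using assms by simp
  have t2: "(2 * sqrt ?g * \<alpha> * ?L)\<^sup>2 = 4 * ?g * \<alpha>\<^sup>2 * ?L\<^sup>2"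
    using g by (simp add: power_mult_distrib)
  have "\<Phi> x \<in> borel_measurable M" "\<Phi> y \<in> borel_measurable M"
    using assms(1) unfolding is_dgff_def by blast+
  then have "measure M {\<omega> \<in> space M. x \<in> HN N l \<alpha> \<Phi> \<omega> \<and> y \<in> HN N l \<alpha> \<Phi> \<omega>}
      \<le> measure M {\<omega> \<in> space M. 2 * sqrt ?g * \<alpha> * ?L \<le> \<Phi> x \<omega> \<and> 2 * sqrt ?g * \<alpha> * ?L \<le> \<Phi> y \<omega>}"
    unfolding HN_def by (intro finite_measure_mono) auto
  also have "\<dots> \<le> exp (- 2 * (2 * sqrt ?g * \<alpha> * ?L)\<^sup>2 / (?g * D * ?L + c))"
    by (rule dgff_two_point_tail_le[OF assms(1-4) _ var]) (use g L assms small t2 in auto)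
  also have "- 2 * (2 * sqrt ?g * \<alpha> * ?L)\<^sup>2 / (?g * D * ?L + c)
      = - (8 * ?g * \<alpha>\<^sup>2 * ?L\<^sup>2 / ((?g * D) * ?L + c))"
    unfolding t2 by (simp add: mult_ac)
  also have "exp \<dots> \<le> exp (8 * ?g * \<alpha>\<^sup>2 * c / (?g * D)\<^sup>2 - 8 * ?g * \<alpha>\<^sup>2 / (?g * D) * ?L)"
    using g pos assms by (subst exp_le_cancel_iff, intro neg_sq_div_affine_le) (auto simp: mult_ac)
  also have "8 * ?g * \<alpha>\<^sup>2 * c / (?g * D)\<^sup>2 - 8 * ?g * \<alpha>\<^sup>2 / (?g * D) * ?L
      = 8 * \<alpha>\<^sup>2 * c / (?g * D\<^sup>2) + (- 8 * \<alpha>\<^sup>2 / D) * ?L"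
    using g assms by (simp add: power2_eq_square field_simps)
  also have "exp \<dots> = exp (8 * \<alpha>\<^sup>2 * c / (?g * D\<^sup>2)) * real N powr (- 8 * \<alpha>\<^sup>2 / D)"
    using assms by (simp add: powr_def flip: exp_add)
  finally show ?thesis .
qed

section \<open>The two-point estimate\<close>

lemma distc_le_1_if_bdry:
  assumes "x \<in> bdry N"
  shows "distc N x \<le> 1"
proof -
  obtain z where z: "z \<in> nbrs x" "z \<notin> VN N" using assms unfolding bdry_def by blast
  then have "ptnorm (x - z) = 1" unfolding nbrs_def ptnorm_def by auto
  then have "1 \<in> {ptnorm (x - z) | z. z \<notin> VN N}"
    unfolding mem_Collect_eq by (intro exI[of _ z]) (use z(2) in simp)
  moreover have "bdd_below {ptnorm (x - z) | z. z \<notin> VN N}"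
    by (rule bdd_belowI[where m = 0]) (auto simp: ptnorm_def)
  ultimately show ?thesis unfolding distc_def by (rule cInf_lower)
qed

lemma VNl_imp_intV:
  assumes "1 < l * real N" "x \<in> VNl N l"
  shows "x \<in> intV N"
  using assms distc_le_1_if_bdry[of x N] unfolding VNl_def intV_def by force

lemma Ffun_2_gamma_star:
  assumes "0 < \<beta>" "\<beta> < 1"
  shows "Ffun 2 \<beta> (2 / (2 - \<beta>)) = 2 / (2 - \<beta>)"
proof -
  define u where "u = 2 - \<beta>"
  have u: "u > 0" "u \<noteq> 0" unfolding u_def using assms by auto
  have b: "\<beta> \<noteq> 0" using assms by simp
  have e1: "1 - 2 / u * (1 - \<beta>) = \<beta> / u" using u unfolding u_def by (simp add: field_simps)
  have A: "(2 / u)\<^sup>2 * (1 - \<beta>) = 4 * (1 - \<beta>) / u\<^sup>2" by (simp add: power_divide)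
  have B: "2 * (\<beta> / u)\<^sup>2 / \<beta> = 2 * \<beta> / u\<^sup>2" using b by (simp add: power_divide power2_eq_square)
  have C: "4 * (1 - \<beta>) / u\<^sup>2 + 2 * \<beta> / u\<^sup>2 = 2 / u"
  proof -
    have "4 * (1 - \<beta>) / u\<^sup>2 + 2 * \<beta> / u\<^sup>2 = (2 * u) / u\<^sup>2" unfolding u_def by (simp add: add_divide_distrib[symmetric] algebra_simps)
    also have "\<dots> = 2 / u" using u by (simp add: power2_eq_square)
    finally show ?thesis .
  qed
  have "Ffun 2 \<beta> (2 / u) = (2 / u)\<^sup>2 * (1 - \<beta>) + 2 * (\<beta> / u)\<^sup>2 / \<beta>"
    unfolding Ffun_def e1 by simp
  also have "\<dots> = 2 / u" unfolding A B C ..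
  finally show ?thesis unfolding u_def .
qed

lemma Ffun_exponent_le:
  assumes "0 < \<alpha>" "\<alpha> < \<beta>" "\<beta> < 1" "0 < \<epsilon>0" "\<epsilon>0 \<le> \<delta> / 8"
  shows "- 8 * \<alpha>\<^sup>2 / (4 - 2 * (\<beta> * (1 - \<epsilon>0)) + \<delta> / 4) \<le> - 2 * \<alpha>\<^sup>2 * Ffun 2 \<beta> (2 / (2 - \<beta>)) + \<delta>"
proof -
  define u where "u = 2 - \<beta>"
  define \<eta> where "\<eta> = 2 * \<beta> * \<epsilon>0 + \<delta> / 4"
  have u: "1 < u" "u < 2" using assms unfolding u_def by auto
  have "0 \<le> \<beta> * \<epsilon>0" "\<beta> * \<epsilon>0 \<le> \<epsilon>0" using assms by (simp_all add: mult_le_cancel_right1)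
  then have \<eta>: "0 \<le> \<eta>" "\<eta> \<le> \<delta> / 2" unfolding \<eta>_def using assms by linarith+
  have "4 * \<alpha>\<^sup>2 / u - 8 * \<alpha>\<^sup>2 / (2 * u + \<eta>) = 4 * \<alpha>\<^sup>2 * \<eta> / (u * (2 * u + \<eta>))"
    using u \<eta> by (simp add: field_simps)
  also have "\<dots> \<le> 4 * 1 * \<eta> / (1 * 2)"
    using u \<eta> assms by (intro frac_le mult_mono mult_right_mono) (auto simp: power_le_one)
  also have "\<dots> \<le> \<delta>" using \<eta> by simp
  finally have "4 * \<alpha>\<^sup>2 / u - 8 * \<alpha>\<^sup>2 / (2 * u + \<eta>) \<le> \<delta>" .
  moreover have "2 * \<alpha>\<^sup>2 * Ffun 2 \<beta> (2 / (2 - \<beta>)) = 4 * \<alpha>\<^sup>2 / u"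
    using Ffun_2_gamma_star[of \<beta>] assms unfolding u_def by simp
  moreover have "- 8 * \<alpha>\<^sup>2 / (4 - 2 * (\<beta> * (1 - \<epsilon>0)) + \<delta> / 4) = - (8 * \<alpha>\<^sup>2 / (2 * u + \<eta>))"
    unfolding u_def \<eta>_def by (simp add: algebra_simps)
  ultimately show ?thesis by linarith
qed

lemma Sset_imp_intV_far:
  assumes "(x, y) \<in> Sset N l \<beta> \<epsilon>" "1 < l * real N" "0 < \<beta>" "\<epsilon> \<le> \<epsilon>0"
  shows "x \<in> intV N" "y \<in> intV N" "x \<noteq> y" "real N powr (2 * (\<beta> * (1 - \<epsilon>0))) \<le> (ptnorm (x - y))\<^sup>2"
proof -
  have S: "x \<in> VNl N l" "y \<in> VNl N l" "real N powr (\<beta> * (1 - \<epsilon>)) \<le> ptnorm (x - y)"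
    using assms(1) unfolding Sset_def by auto
  then show "x \<in> intV N" "y \<in> intV N" using VNl_imp_intV assms(2) by blast+
  have "N > 0" using assms(2) by (cases N) auto
  then have "real N powr (\<beta> * (1 - \<epsilon>0)) \<le> real N powr (\<beta> * (1 - \<epsilon>))"
    using assms by (intro powr_mono mult_left_mono) auto
  then have near: "real N powr (\<beta> * (1 - \<epsilon>0)) \<le> ptnorm (x - y)" using S by linarith
  then show "x \<noteq> y" using \<open>N > 0\<close> by (auto simp: ptnorm_def)
  have "real N powr (2 * (\<beta> * (1 - \<epsilon>0))) = (real N powr (\<beta> * (1 - \<epsilon>0)))\<^sup>2"
    unfolding power2_eq_square powr_add[symmetric] by simp
  then show "real N powr (2 * (\<beta> * (1 - \<epsilon>0))) \<le> (ptnorm (x - y))\<^sup>2"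
    using near by (simp add: power_mono)
qed

lemma dgff_high_pair_prob_le_eventually:
  fixes l \<delta> \<alpha> \<beta> \<epsilon>0 :: real
  assumes "0 < l" "0 < \<delta>" "0 < \<alpha>" "\<alpha> < \<beta>" "\<beta> < 1" "0 < \<epsilon>0" "\<epsilon>0 \<le> 1 / 2"
  obtains C0 N2 where "0 < C0"
    "\<And>\<epsilon> N (M :: 'a measure) \<Phi> x y. \<epsilon> \<le> \<epsilon>0 \<Longrightarrow> N \<ge> N2 \<Longrightarrow> is_dgff M N \<Phi> \<Longrightarrow>
       (x, y) \<in> Sset N l \<beta> \<epsilon> \<Longrightarrow>
       measure M {\<omega> \<in> space M. x \<in> HN N l \<alpha> \<Phi> \<omega> \<and> y \<in> HN N l \<alpha> \<Phi> \<omega>}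
       \<le> C0 * real N powr (- 8 * \<alpha>\<^sup>2 / (4 - 2 * (\<beta> * (1 - \<epsilon>0)) + \<delta> / 4))"
proof -
  define \<theta> where "\<theta> = 2 * (\<beta> * (1 - \<epsilon>0))"
  define D where "D = 4 - \<theta> + \<delta> / 4"
  have "0 < \<beta> * (1 - \<epsilon>0)" "\<beta> * (1 - \<epsilon>0) \<le> 1"
    using assms by (auto intro: mult_le_one)
  then have \<theta>: "0 < \<theta>" "\<theta> \<le> 2" unfolding \<theta>_def by auto
  then have "0 < D" unfolding D_def using assms by linarith
  then have "0 < gconst * D" by (simp add: gconst_def)
  obtain c N1 where green_sum: "\<And>N x y. N \<ge> N1 \<Longrightarrow> x \<in> intV N \<Longrightarrow> y \<in> intV N \<Longrightarrow>
      real N powr \<theta> \<le> (ptnorm (x - y))\<^sup>2 \<Longrightarrow>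
      green N x x + green N x y + green N y x + green N y y \<le> gconst * D * ln (real N) + c"
    using green_pair_sum_le[OF \<theta>, of "\<delta> / 4"] assms(2) unfolding D_def by force
  have "eventually (\<lambda>N. N1 \<le> N \<and> 2 \<le> N \<and> 1 < l * real N \<and> 0 < gconst * D * ln (real N) + c
      \<and> gconst * D * ln (real N) + c \<le> 16 * gconst * \<alpha>\<^sup>2 * (ln (real N))\<^sup>2) sequentially"
    using assms \<open>0 < gconst * D\<close>
    by (intro eventually_conj eventually_ge_at_top) (real_asymp simp: gconst_def)+
  then obtain N2 where N2: "\<And>N. N \<ge> N2 \<Longrightarrow> N1 \<le> N \<and> 2 \<le> N \<and> 1 < l * real N
      \<and> 0 < gconst * D * ln (real N) + c
      \<and> gconst * D * ln (real N) + c \<le> 16 * gconst * \<alpha>\<^sup>2 * (ln (real N))\<^sup>2"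
    unfolding eventually_sequentially by blast
  show ?thesis
  proof
    show "0 < exp (8 * \<alpha>\<^sup>2 * c / (gconst * D\<^sup>2))" by simp
    fix \<epsilon> N and M :: "'a measure" and \<Phi> x y
    assume "\<epsilon> \<le> \<epsilon>0" "N \<ge> N2" "is_dgff M N \<Phi>" "(x, y) \<in> Sset N l \<beta> \<epsilon>"
    note N = N2[OF \<open>N \<ge> N2\<close>]
    have "0 < \<beta>" using assms by linarith
    note far = Sset_imp_intV_far[OF \<open>(x, y) \<in> Sset N l \<beta> \<epsilon>\<close> _ \<open>0 < \<beta>\<close> \<open>\<epsilon> \<le> \<epsilon>0\<close>, folded \<theta>_def]
    have "green N x x + green N x y + green N y x + green N y y \<le> gconst * D * ln (real N) + c"
      using green_sum far N by blast
    with far N show "measure M {\<omega> \<in> space M. x \<in> HN N l \<alpha> \<Phi> \<omega> \<and> y \<in> HN N l \<alpha> \<Phi> \<omega>}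
       \<le> exp (8 * \<alpha>\<^sup>2 * c / (gconst * D\<^sup>2)) * real N powr (- 8 * \<alpha>\<^sup>2 / (4 - 2 * (\<beta> * (1 - \<epsilon>0)) + \<delta> / 4))"
      unfolding D_def[unfolded \<theta>_def, symmetric]
      using dgff_high_pair_prob_le_powr[OF \<open>is_dgff M N \<Phi>\<close> _ _ _ _ \<open>0 < \<alpha>\<close> \<open>0 < D\<close>] by blast
  qed
qed

lemma le_powr_if_eventually_le_powr:
  fixes p C0 E :: real and N N2 k :: nat
  assumes "1 \<le> N" "p \<le> 1" "N2 \<le> N \<Longrightarrow> p \<le> C0 * real N powr E" "0 \<le> C0" "- real k \<le> E"
  shows "p \<le> (C0 + real N2 ^ k) * real N powr E"
proof (cases "N2 \<le> N")
  case True
  then show ?thesis using assms by (simp add: distrib_right add_increasing2)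
next
  case False
  have "1 / real N2 ^ k \<le> 1 / real N ^ k"
    using assms False by (intro divide_left_mono power_mono) auto
  also have "\<dots> = real N powr (- real k)"
    using assms by (simp add: powr_minus powr_realpow divide_inverse)
  also have "\<dots> \<le> real N powr E"
    using assms by (intro powr_mono) auto
  finally have "1 \<le> real N2 ^ k * real N powr E"
    using assms False by (simp add: divide_le_eq mult.commute)
  then show ?thesis using assms by (simp add: distrib_right add_increasing)
qed

lemma dgff_high_pair_prob_le:
  fixes l \<delta> \<alpha> \<beta> \<epsilon>0 :: real
  assumes "0 < l" "0 < \<delta>" "0 < \<alpha>" "\<alpha> < \<beta>" "\<beta> < 1" "0 < \<epsilon>0" "\<epsilon>0 \<le> 1 / 2" "\<epsilon>0 \<le> \<delta> / 8"
  shows "\<exists>C > 0. \<forall>\<epsilon>. 0 < \<epsilon> \<and> \<epsilon> \<le> \<epsilon>0 \<longrightarrow> (\<forall>N \<ge> 1. \<forall>(M :: 'a measure) \<Phi>. is_dgff M N \<Phi> \<longrightarrow>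
        (\<forall>(x, y) \<in> Sset N l \<beta> \<epsilon>.
           measure M {\<omega> \<in> space M. x \<in> HN N l \<alpha> \<Phi> \<omega> \<and> y \<in> HN N l \<alpha> \<Phi> \<omega>}
           \<le> C * real N powr (- 2 * \<alpha>\<^sup>2 * Ffun 2 \<beta> (2 / (2 - \<beta>)) + \<delta>)))"
proof -
  define D where "D = 4 - 2 * (\<beta> * (1 - \<epsilon>0)) + \<delta> / 4"
  define E where "E = - 2 * \<alpha>\<^sup>2 * Ffun 2 \<beta> (2 / (2 - \<beta>)) + \<delta>"
  obtain C0 N2 where "0 < C0" and large: "\<And>\<epsilon> N (M :: 'a measure) \<Phi> x y. \<epsilon> \<le> \<epsilon>0 \<Longrightarrow> N \<ge> N2 \<Longrightarrow>
      is_dgff M N \<Phi> \<Longrightarrow> (x, y) \<in> Sset N l \<beta> \<epsilon> \<Longrightarrow>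
      measure M {\<omega> \<in> space M. x \<in> HN N l \<alpha> \<Phi> \<omega> \<and> y \<in> HN N l \<alpha> \<Phi> \<omega>} \<le> C0 * real N powr (- 8 * \<alpha>\<^sup>2 / D)"
    using dgff_high_pair_prob_le_eventually[OF assms(1-7), folded D_def] by blast
  have "\<beta> * (1 - \<epsilon>0) \<le> 1" using assms by (auto intro: mult_le_one)
  then have "2 \<le> D" unfolding D_def using assms by linarith
  have E: "- 8 * \<alpha>\<^sup>2 / D \<le> E"
    unfolding D_def E_def using assms by (intro Ffun_exponent_le) auto
  moreover have "- 4 \<le> - 8 * \<alpha>\<^sup>2 / D"
    using \<open>2 \<le> D\<close> assms power_le_one[of \<alpha> 2] by (simp add: field_simps)
  ultimately have "- real 4 \<le> E" by simp
  have bound: "measure M {\<omega> \<in> space M. x \<in> HN N l \<alpha> \<Phi> \<omega> \<and> y \<in> HN N l \<alpha> \<Phi> \<omega>}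
      \<le> (C0 + real N2 ^ 4) * real N powr E"
    if "\<epsilon> \<le> \<epsilon>0" "N \<ge> 1" "is_dgff M N \<Phi>" "(x, y) \<in> Sset N l \<beta> \<epsilon>"
    for \<epsilon> N and M :: "'a measure" and \<Phi> x y
  proof (rule le_powr_if_eventually_le_powr[OF \<open>N \<ge> 1\<close> _ _ less_imp_le[OF \<open>0 < C0\<close>] \<open>- real 4 \<le> E\<close>])
    show "measure M {\<omega> \<in> space M. x \<in> HN N l \<alpha> \<Phi> \<omega> \<and> y \<in> HN N l \<alpha> \<Phi> \<omega>} \<le> 1"
      using \<open>is_dgff M N \<Phi>\<close> unfolding is_dgff_def by (simp add: prob_space.prob_le_1)
    assume "N2 \<le> N"
    then have "measure M {\<omega> \<in> space M. x \<in> HN N l \<alpha> \<Phi> \<omega> \<and> y \<in> HN N l \<alpha> \<Phi> \<omega>}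
        \<le> C0 * real N powr (- 8 * \<alpha>\<^sup>2 / D)"
      using large that by blast
    also have "\<dots> \<le> C0 * real N powr E"
      using E that \<open>0 < C0\<close> by (intro mult_left_mono powr_mono) auto
    finally show "measure M {\<omega> \<in> space M. x \<in> HN N l \<alpha> \<Phi> \<omega> \<and> y \<in> HN N l \<alpha> \<Phi> \<omega>}
        \<le> C0 * real N powr E" .
  qed
  have "0 < C0 + real N2 ^ 4" using \<open>0 < C0\<close> by (simp add: add_pos_nonneg)
  then show ?thesis
    unfolding E_def[symmetric] using bound by (intro exI[of _ "C0 + real N2 ^ 4"]) auto
qed

text \<open>The threshold \<open>\<epsilon>0\<close> below does not depend on \<open>(\<alpha>, \<beta>)\<close>.\<close>

theorem lemma8p2:
  fixes l \<delta> :: real and K :: "(real \<times> real) set"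
  assumes "0 < l" "l < 1/2" "\<delta> > 0"
    and "compact K" "K \<subseteq> {0<..<1} \<times> {0<..<1}"
  shows "\<exists>\<epsilon>0 > 0. \<forall>(\<alpha>, \<beta>) \<in> K. \<alpha> < \<beta> \<longrightarrow>
     (\<exists>C > 0. \<forall>\<epsilon>. 0 < \<epsilon> \<and> \<epsilon> \<le> \<epsilon>0 \<longrightarrow> (\<forall>N \<ge> 1. \<forall>(M :: 'a measure) \<Phi>. is_dgff M N \<Phi> \<longrightarrow>
        (\<forall>(x, y) \<in> Sset N l \<beta> \<epsilon>.
           measure M {\<omega> \<in> space M. x \<in> HN N l \<alpha> \<Phi> \<omega> \<and> y \<in> HN N l \<alpha> \<Phi> \<omega>}
           \<le> C * real N powr (- 2 * \<alpha>\<^sup>2 * Ffun 2 \<beta> (2 / (2 - \<beta>)) + \<delta>))))"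
proof -
  define \<epsilon>0 where "\<epsilon>0 = min (1 / 2) (\<delta> / 8)"
  have \<epsilon>0: "0 < \<epsilon>0" "\<epsilon>0 \<le> 1 / 2" "\<epsilon>0 \<le> \<delta> / 8"
    using assms(3) unfolding \<epsilon>0_def by auto
  have "0 < \<alpha> \<and> \<beta> < 1" if "(\<alpha>, \<beta>) \<in> K" for \<alpha> \<beta>
    using assms(5) that by auto
  then show ?thesis
    using dgff_high_pair_prob_le[OF assms(1,3) _ _ _ \<epsilon>0] \<epsilon>0(1) by blast
qed
end
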